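(* Let $n=2K+1$, let $m_1,\dots,m_n>0$ be fixed constants, and let $M=\{(x_1,\dots,x_n)\in\mathbb{R}^n: x_1<\dots<x_n\}$ carry the Poisson bracket determined by $\{x_i,x_k\}=\operatorname{sgn}(x_i-x_k)$, i.e. $\{f,g\}=\sum_{i,k}\operatorname{sgn}(x_i-x_k)\frac{\partial f}{\partial x_i}\frac{\partial g}{\partial x_k}$. Set $h_i=m_ie^{x_i}$, $g_i=m_ie^{-x_i}$, $$H_j=\sum_{\substack{I,J\in\binom{[2K+1]}{j}\\ I<J}} h_I g_J,\quad 1\le j\le K,\qquad H_c=\sum_{\substack{I\in\binom{[2K+1]}{K+1},\,J\in\binom{[2K+1]}{K}\\ I<J}} h_I g_J=\prod_{j=1}^{2K+1} m_j e^{(-1)^{j+1}x_j}.$$ Then the functions $H_1,\dots,H_K,H_c$ pairwise Poisson commute.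
   Context: $[k]=\{1,\dots,k\}$ and $\binom{[k]}{j}$ is the set of $j$-element subsets $I=\{i_1<\dots<i_j\}$ of $[k]$. For $I,J\in\binom{[k]}{j}$, $I<J$ means $i_1<j_1<\dots<i_j<j_j$; for $I\in\binom{[k]}{j+1}$, $J\in\binom{[k]}{j}$, $I<J$ means $i_1<j_1<\dots<i_j<j_j<i_{j+1}$. Also $h_I=\prod_{i\in I}h_i$, $g_J=\prod_{j\in J}g_j$. (These are constants of motion of the conservative mCH peakon system $\dot x_j=2\sum_{k\ne j}m_jm_ke^{-|x_j-x_k|}+4\sum_{1\le i<j<k\le n}m_im_ke^{-|x_i-x_k|}$ on $M$.) *)

theory Defs
  imports "HOL-Analysis.Analysis"
begin

(* Points of R^n are functions x :: nat \<Rightarrow> real; only the coordinates x 1, ..., x n matter. *)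

definition phase_M :: "nat \<Rightarrow> (nat \<Rightarrow> real) set" where
  "phase_M n = {x. \<forall>i\<in>{1..n}. \<forall>k\<in>{1..n}. i < k \<longrightarrow> x i < x k}"

definition pderiv_at :: "((nat \<Rightarrow> real) \<Rightarrow> real) \<Rightarrow> nat \<Rightarrow> (nat \<Rightarrow> real) \<Rightarrow> real" where
  "pderiv_at f i x = deriv (\<lambda>t. f (x(i := t))) (x i)"

definition poisson :: "nat \<Rightarrow> ((nat \<Rightarrow> real) \<Rightarrow> real) \<Rightarrow> ((nat \<Rightarrow> real) \<Rightarrow> real)
    \<Rightarrow> (nat \<Rightarrow> real) \<Rightarrow> real" where
  "poisson n f g x = (\<Sum>i\<in>{1..n}. \<Sum>k\<in>{1..n}.
      sgn (x i - x k) * pderiv_at f i x * pderiv_at g k x)"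

definition subsets_of :: "nat \<Rightarrow> nat \<Rightarrow> nat set set" where
  "subsets_of k j = {I. I \<subseteq> {1..k} \<and> card I = j}"

(* I < J for |I| = |J| = j:  i_1 < j_1 < i_2 < j_2 < ... < i_j < j_j *)
definition interlace_eq :: "nat set \<Rightarrow> nat set \<Rightarrow> bool" where
  "interlace_eq I J = (let a = sorted_list_of_set I; b = sorted_list_of_set J; j = card J in
     (\<forall>r<j. a ! r < b ! r) \<and> (\<forall>r. r + 1 < j \<longrightarrow> b ! r < a ! (r + 1)))"

(* I < J for |I| = j+1, |J| = j:  i_1 < j_1 < ... < i_j < j_j < i_{j+1} *)
definition interlace_succ :: "nat set \<Rightarrow> nat set \<Rightarrow> bool" where
  "interlace_succ I J = (let a = sorted_list_of_set I; b = sorted_list_of_set J; j = card J in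
     (\<forall>r<j. a ! r < b ! r \<and> b ! r < a ! (r + 1)))"

definition h_I :: "(nat \<Rightarrow> real) \<Rightarrow> nat set \<Rightarrow> (nat \<Rightarrow> real) \<Rightarrow> real" where
  "h_I m I x = (\<Prod>i\<in>I. m i * exp (x i))"

definition g_J :: "(nat \<Rightarrow> real) \<Rightarrow> nat set \<Rightarrow> (nat \<Rightarrow> real) \<Rightarrow> real" where
  "g_J m J x = (\<Prod>i\<in>J. m i * exp (- x i))"

definition Hj :: "nat \<Rightarrow> (nat \<Rightarrow> real) \<Rightarrow> nat \<Rightarrow> (nat \<Rightarrow> real) \<Rightarrow> real" where
  "Hj K m j x = (\<Sum>(I, J) \<in> {(I, J). I \<in> subsets_of (2*K+1) j \<and> J \<in> subsets_of (2*K+1) j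
                      \<and> interlace_eq I J}. h_I m I x * g_J m J x)"

definition Hc :: "nat \<Rightarrow> (nat \<Rightarrow> real) \<Rightarrow> (nat \<Rightarrow> real) \<Rightarrow> real" where
  "Hc K m x = (\<Sum>(I, J) \<in> {(I, J). I \<in> subsets_of (2*K+1) (K+1) \<and> J \<in> subsets_of (2*K+1) K
                      \<and> interlace_succ I J}. h_I m I x * g_J m J x)"

end

theory Submission
  imports Defs
begin

text \<open>
  Let A_n(z) be the sum of z^|I| h_I g_J over the interlacing pairs I < J of subsets of [n]
  with |I| = |J|, and B_n(z) the same sum over the pairs with |I| = |J| + 1. Adjoining the
  point n + 1 gives the transfer recursion A_(n+1) = A_n + g_(n+1) B_n, B_(n+1) = B_n + z h_(n+1) A_n.
  On M the Poisson bracket only sees the order of the indices, and induction along the recursion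
  yields the r-matrix relations {A(\<lambda>), A(\<mu>)} = {B(\<lambda>), B(\<mu>)} = 0 and
  (\<mu> - \<lambda>) {A(\<lambda>), B(\<mu>)} = \<lambda> A(\<lambda>) B(\<mu>) - \<mu> A(\<mu>) B(\<lambda>).
  The H_j are the coefficients of A_(2K+1), so they commute. H_c is the single monomial with
  alternating exponents; its gradient is a multiple of the alternating vector, which the sign
  matrix (sgn (i - k)) annihilates in odd dimension, so H_c is a Casimir.
\<close>

section \<open>Interlacing pairs\<close>

lemma sorted_list_of_set_insert_greatest:
  fixes A :: "'a::linorder set"
  assumes "finite A" "\<forall>a\<in>A. a < s"
  shows "sorted_list_of_set (insert s A) = sorted_list_of_set A @ [s]"
  using assms by (subst sorted_list_of_set_unique[symmetric]) (auto simp: sorted_wrt_append)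

lemma sorted_list_of_set_nth_mem:
  "finite A \<Longrightarrow> r < card A \<Longrightarrow> sorted_list_of_set A ! r \<in> A"
  by (metis length_sorted_list_of_set nth_mem set_sorted_list_of_set)

lemma interlace_eq_imp_less:
  assumes "interlace_eq I J" "finite I" "card I = card J" "i \<in> I"
  shows "\<exists>j\<in>J. i < j"
proof -
  obtain r where r: "r < card I" "i = sorted_list_of_set I ! r"
    using assms(2,4) by (metis in_set_conv_nth length_sorted_list_of_set set_sorted_list_of_set)
  have "finite J" using assms(3) r(1) card.infinite by fastforce
  then have "sorted_list_of_set J ! r \<in> J" using assms(3) r(1) by (simp add: sorted_list_of_set_nth_mem)
  moreover have "i < sorted_list_of_set J ! r" using assms(1,3) r by (simp add: interlace_eq_def Let_def)
  ultimately show ?thesis by blast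
qed

lemma interlace_succ_imp_less:
  assumes "interlace_succ I J" "finite J" "card I = Suc (card J)" "j \<in> J"
  shows "\<exists>i\<in>I. j < i"
proof -
  obtain r where r: "r < card J" "j = sorted_list_of_set J ! r"
    using assms(2,4) by (metis in_set_conv_nth length_sorted_list_of_set set_sorted_list_of_set)
  have "finite I" using assms(3) card.infinite by fastforce
  then have "sorted_list_of_set I ! (r + 1) \<in> I" using assms(3) r(1) by (simp add: sorted_list_of_set_nth_mem)
  moreover have "j < sorted_list_of_set I ! (r + 1)" using assms(1) r by (simp add: interlace_succ_def Let_def)
  ultimately show ?thesis by blast
qed

lemma interlace_eq_insert_greatest:
  assumes fin: "finite I" "finite J" and less: "\<forall>y\<in>I \<union> J. y < s" and card: "card I = Suc (card J)"
  shows "interlace_eq I (insert s J) \<longleftrightarrow> interlace_succ I J"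
proof -
  define a b where "a = sorted_list_of_set I" and "b = sorted_list_of_set J"
  have b_ins: "sorted_list_of_set (insert s J) = b @ [s]"
    unfolding b_def by (rule sorted_list_of_set_insert_greatest) (use fin less in auto)
  have card_ins: "card (insert s J) = Suc (card J)" using fin less by auto
  have "a ! card J < s" using less fin card by (simp add: a_def sorted_list_of_set_nth_mem)
  then have "interlace_eq I (insert s J) \<longleftrightarrow>
      (\<forall>r<card J. a ! r < b ! r) \<and> (\<forall>r<card J. b ! r < a ! (r + 1))"
    unfolding interlace_eq_def Let_def b_ins card_ins a_def[symmetric]
    by (auto simp: nth_append b_def less_Suc_eq) (metis Suc_lessI lessI)+
  then show ?thesis by (auto simp: interlace_succ_def Let_def a_def b_def)
qed

lemma interlace_succ_insert_greatest:
  assumes fin: "finite I" "finite J" and less: "\<forall>y\<in>I \<union> J. y < s" and card: "card I = card J"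
  shows "interlace_succ (insert s I) J \<longleftrightarrow> interlace_eq I J"
proof -
  define a b where "a = sorted_list_of_set I" and "b = sorted_list_of_set J"
  have a_ins: "sorted_list_of_set (insert s I) = a @ [s]"
    unfolding a_def by (rule sorted_list_of_set_insert_greatest) (use fin less in auto)
  have "\<forall>r<card J. b ! r < s" using less fin by (simp add: b_def sorted_list_of_set_nth_mem)
  then have "interlace_succ (insert s I) J \<longleftrightarrow>
      (\<forall>r<card J. a ! r < b ! r) \<and> (\<forall>r. r + 1 < card J \<longrightarrow> b ! r < a ! (r + 1))"
    unfolding interlace_succ_def Let_def a_ins b_def[symmetric]
    using card by (auto simp: nth_append a_def)
  then show ?thesis by (auto simp: interlace_eq_def Let_def a_def b_def)
qed

definition eq_pairs :: "nat \<Rightarrow> (nat set \<times> nat set) set" where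
  "eq_pairs n = {(I, J). I \<subseteq> {1..n} \<and> J \<subseteq> {1..n} \<and> card I = card J \<and> interlace_eq I J}"

definition succ_pairs :: "nat \<Rightarrow> (nat set \<times> nat set) set" where
  "succ_pairs n = {(I, J). I \<subseteq> {1..n} \<and> J \<subseteq> {1..n} \<and> card I = Suc (card J) \<and> interlace_succ I J}"

lemma eq_pairs_0: "eq_pairs 0 = {({}, {})}"
  by (auto simp: eq_pairs_def interlace_eq_def)

lemma succ_pairs_0: "succ_pairs 0 = {}"
  by (auto simp: succ_pairs_def)

lemma finite_eq_pairs: "finite (eq_pairs n)"
  by (rule finite_subset[of _ "Pow {1..n} \<times> Pow {1..n}"]) (auto simp: eq_pairs_def)

lemma finite_succ_pairs: "finite (succ_pairs n)"
  by (rule finite_subset[of _ "Pow {1..n} \<times> Pow {1..n}"]) (auto simp: succ_pairs_def)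

lemma subset_atLeastAtMost_Suc: "Suc n \<notin> I \<Longrightarrow> I \<subseteq> {1..Suc n} \<Longrightarrow> I \<subseteq> {1..n}"
  by (auto simp: subset_iff le_Suc_eq)

lemma eq_pairs_SucI: "(I, J) \<in> succ_pairs n \<Longrightarrow> (I, insert (Suc n) J) \<in> eq_pairs (Suc n)"
proof -
  assume "(I, J) \<in> succ_pairs n"
  then have IJ: "I \<subseteq> {1..n}" "J \<subseteq> {1..n}" "card I = Suc (card J)" "interlace_succ I J"
    by (auto simp: succ_pairs_def)
  have fin: "finite I" "finite J" using IJ by (auto intro: finite_subset)
  have less: "\<forall>y\<in>I \<union> J. y < Suc n" using IJ by auto
  have "interlace_eq I (insert (Suc n) J)"
    using IJ(4) interlace_eq_insert_greatest[OF fin less IJ(3)] by simp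
  moreover have "Suc n \<notin> J" using IJ(2) by auto
  ultimately show ?thesis using IJ fin by (auto simp: eq_pairs_def)
qed

lemma succ_pairs_SucI: "(I, J) \<in> eq_pairs n \<Longrightarrow> (insert (Suc n) I, J) \<in> succ_pairs (Suc n)"
proof -
  assume "(I, J) \<in> eq_pairs n"
  then have IJ: "I \<subseteq> {1..n}" "J \<subseteq> {1..n}" "card I = card J" "interlace_eq I J"
    by (auto simp: eq_pairs_def)
  have fin: "finite I" "finite J" using IJ by (auto intro: finite_subset)
  have less: "\<forall>y\<in>I \<union> J. y < Suc n" using IJ by auto
  have "interlace_succ (insert (Suc n) I) J"
    using IJ(4) interlace_succ_insert_greatest[OF fin less IJ(3)] by simp
  moreover have "Suc n \<notin> I" using IJ(1) by auto
  ultimately show ?thesis using IJ fin by (auto simp: succ_pairs_def)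
qed

lemma eq_pairs_Suc:
  "eq_pairs (Suc n) = eq_pairs n \<union> (\<lambda>(I, J). (I, insert (Suc n) J)) ` succ_pairs n"
proof (intro equalityI subsetI)
  fix p assume "p \<in> eq_pairs (Suc n)"
  then obtain I J where p: "p = (I, J)" and IJ: "I \<subseteq> {1..Suc n}" "J \<subseteq> {1..Suc n}"
    "card I = card J" "interlace_eq I J"
    by (auto simp: eq_pairs_def)
  have fin: "finite I" "finite J" using IJ by (auto intro: finite_subset)
  have "Suc n \<notin> I" using interlace_eq_imp_less[OF IJ(4) fin(1) IJ(3)] IJ(2) by fastforce
  then have I: "I \<subseteq> {1..n}" using IJ(1) by (rule subset_atLeastAtMost_Suc)
  show "p \<in> eq_pairs n \<union> (\<lambda>(I, J). (I, insert (Suc n) J)) ` succ_pairs n"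
  proof (cases "Suc n \<in> J")
    case False
    then show ?thesis
      using I IJ(3,4) subset_atLeastAtMost_Suc[OF False IJ(2)] by (auto simp: p eq_pairs_def)
  next
    case True
    define J0 where "J0 = J - {Suc n}"
    have J: "J = insert (Suc n) J0" "J0 \<subseteq> {1..n}" "Suc n \<notin> J0"
      using True IJ(2) by (auto simp: J0_def)
    have card: "card I = Suc (card J0)" using IJ(3) fin(2) J by (simp add: card_insert_if)
    have less: "\<forall>y\<in>I \<union> J0. y < Suc n" using I J by auto
    have "interlace_succ I J0"
      using IJ(4) interlace_eq_insert_greatest[OF fin(1) finite_subset[OF J(2)] less card] J by simp
    then have "(I, J0) \<in> succ_pairs n" using I J card by (simp add: succ_pairs_def)
    then show ?thesis using J by (auto simp: p)
  qed
qed (auto simp: eq_pairs_SucI, auto simp: eq_pairs_def)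

lemma succ_pairs_Suc:
  "succ_pairs (Suc n) = succ_pairs n \<union> (\<lambda>(I, J). (insert (Suc n) I, J)) ` eq_pairs n"
proof (intro equalityI subsetI)
  fix p assume "p \<in> succ_pairs (Suc n)"
  then obtain I J where p: "p = (I, J)" and IJ: "I \<subseteq> {1..Suc n}" "J \<subseteq> {1..Suc n}"
    "card I = Suc (card J)" "interlace_succ I J"
    by (auto simp: succ_pairs_def)
  have fin: "finite I" "finite J" using IJ by (auto intro: finite_subset)
  have "Suc n \<notin> J" using interlace_succ_imp_less[OF IJ(4) fin(2) IJ(3)] IJ(1) by fastforce
  then have J: "J \<subseteq> {1..n}" using IJ(2) by (rule subset_atLeastAtMost_Suc)
  show "p \<in> succ_pairs n \<union> (\<lambda>(I, J). (insert (Suc n) I, J)) ` eq_pairs n"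
  proof (cases "Suc n \<in> I")
    case False
    then show ?thesis
      using J IJ(3,4) subset_atLeastAtMost_Suc[OF False IJ(1)] by (auto simp: p succ_pairs_def)
  next
    case True
    define I0 where "I0 = I - {Suc n}"
    have I: "I = insert (Suc n) I0" "I0 \<subseteq> {1..n}" "Suc n \<notin> I0"
      using True IJ(1) by (auto simp: I0_def)
    have card: "card I0 = card J" using IJ(3) fin(1) I by (simp add: card_insert_if)
    have less: "\<forall>y\<in>I0 \<union> J. y < Suc n" using I J by auto
    have "interlace_eq I0 J"
      using IJ(4) interlace_succ_insert_greatest[OF finite_subset[OF I(2)] fin(2) less card] I by simp
    then have "(I0, J) \<in> eq_pairs n" using I J card by (simp add: eq_pairs_def)
    then show ?thesis using I by (auto simp: p)
  qed
qed (auto simp: succ_pairs_SucI, auto simp: succ_pairs_def)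

section \<open>Generating polynomials and their gradients\<close>

definition monomial :: "(nat \<Rightarrow> real) \<Rightarrow> (nat \<Rightarrow> real) \<Rightarrow> nat set \<Rightarrow> nat set \<Rightarrow> real" where
  "monomial m x I J = h_I m I x * g_J m J x"

definition exponent :: "nat set \<Rightarrow> nat set \<Rightarrow> nat \<Rightarrow> real" where
  "exponent I J i = of_bool (i \<in> I) - of_bool (i \<in> J)"

lemma monomial_insert_left:
  "finite I \<Longrightarrow> s \<notin> I \<Longrightarrow> monomial m x (insert s I) J = m s * exp (x s) * monomial m x I J"
  by (simp add: monomial_def h_I_def)

lemma monomial_insert_right:
  "finite J \<Longrightarrow> s \<notin> J \<Longrightarrow> monomial m x I (insert s J) = m s * exp (- x s) * monomial m x I J"
  by (simp add: monomial_def g_J_def)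

lemma exponent_insert_left: "s \<notin> I \<Longrightarrow> exponent (insert s I) J i = exponent I J i + of_bool (i = s)"
  by (auto simp: exponent_def)

lemma exponent_insert_right: "s \<notin> J \<Longrightarrow> exponent I (insert s J) i = exponent I J i - of_bool (i = s)"
  by (auto simp: exponent_def)

lemma sum_exponent:
  assumes "finite A" "I \<subseteq> A" "J \<subseteq> A"
  shows "(\<Sum>i\<in>A. exponent I J i) = real (card I) - real (card J)"
proof -
  have "(\<Sum>i\<in>A. of_bool (i \<in> I) :: real) = real (card I)"
    if "I \<subseteq> A" for I using assms(1) that by (simp add: sum.If_cases Int_absorb1)
  then show ?thesis using assms by (simp add: exponent_def sum_subtractf)
qed

definition genpoly :: "(nat \<Rightarrow> real) \<Rightarrow> (nat \<Rightarrow> real) \<Rightarrow> (nat set \<times> nat set) set \<Rightarrow> real \<Rightarrow> real" where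
  "genpoly m x S z = (\<Sum>(I, J)\<in>S. z ^ card I * monomial m x I J)"

definition genpoly_grad ::
    "(nat \<Rightarrow> real) \<Rightarrow> (nat \<Rightarrow> real) \<Rightarrow> (nat set \<times> nat set) set \<Rightarrow> real \<Rightarrow> nat \<Rightarrow> real" where
  "genpoly_grad m x S z i = (\<Sum>(I, J)\<in>S. z ^ card I * monomial m x I J * exponent I J i)"

lemma sum_eq_pairs_Suc:
  "sum F (eq_pairs (Suc n)) = sum F (eq_pairs n) + (\<Sum>(I, J)\<in>succ_pairs n. F (I, insert (Suc n) J))"
proof -
  have "inj_on (\<lambda>(I, J). (I, insert (Suc n) J)) (succ_pairs n)"
    by (rule inj_onI) (clarsimp simp: succ_pairs_def, subst (asm) insert_ident; auto)
  moreover have "eq_pairs n \<inter> (\<lambda>(I, J). (I, insert (Suc n) J)) ` succ_pairs n = {}"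
    by (auto simp: eq_pairs_def)
  ultimately show ?thesis
    by (simp add: eq_pairs_Suc sum.union_disjoint finite_eq_pairs finite_succ_pairs sum.reindex
        case_prod_unfold)
qed

lemma sum_succ_pairs_Suc:
  "sum F (succ_pairs (Suc n)) = sum F (succ_pairs n) + (\<Sum>(I, J)\<in>eq_pairs n. F (insert (Suc n) I, J))"
proof -
  have "inj_on (\<lambda>(I, J). (insert (Suc n) I, J)) (eq_pairs n)"
    by (rule inj_onI) (clarsimp simp: eq_pairs_def, subst (asm) insert_ident; auto)
  moreover have "succ_pairs n \<inter> (\<lambda>(I, J). (insert (Suc n) I, J)) ` eq_pairs n = {}"
    by (auto simp: succ_pairs_def)
  ultimately show ?thesis
    by (simp add: succ_pairs_Suc sum.union_disjoint finite_eq_pairs finite_succ_pairs sum.reindex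
        case_prod_unfold)
qed

lemma eq_pairs_memD:
  "(I, J) \<in> eq_pairs n \<Longrightarrow> finite I \<and> finite J \<and> Suc n \<notin> I \<and> Suc n \<notin> J \<and> card I = card J"
  by (auto simp: eq_pairs_def intro: finite_subset)

lemma succ_pairs_memD:
  "(I, J) \<in> succ_pairs n \<Longrightarrow> finite I \<and> finite J \<and> Suc n \<notin> I \<and> Suc n \<notin> J \<and> card I = Suc (card J)"
  by (auto simp: succ_pairs_def intro: finite_subset)

lemma genpoly_eq_pairs_Suc:
  "genpoly m x (eq_pairs (Suc n)) z
     = genpoly m x (eq_pairs n) z + m (Suc n) * exp (- x (Suc n)) * genpoly m x (succ_pairs n) z"
  unfolding genpoly_def sum_eq_pairs_Suc
  by (auto simp: sum_distrib_left case_prod_unfold monomial_insert_right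
      dest!: succ_pairs_memD intro!: sum.cong)

lemma genpoly_succ_pairs_Suc:
  "genpoly m x (succ_pairs (Suc n)) z
     = genpoly m x (succ_pairs n) z + z * m (Suc n) * exp (x (Suc n)) * genpoly m x (eq_pairs n) z"
  unfolding genpoly_def sum_succ_pairs_Suc
  by (auto simp: sum_distrib_left case_prod_unfold monomial_insert_left
      dest!: eq_pairs_memD intro!: sum.cong)

lemma genpoly_grad_eq_pairs_Suc:
  "genpoly_grad m x (eq_pairs (Suc n)) z i
     = genpoly_grad m x (eq_pairs n) z i + m (Suc n) * exp (- x (Suc n))
         * (genpoly_grad m x (succ_pairs n) z i - of_bool (i = Suc n) * genpoly m x (succ_pairs n) z)"
proof -
  have "(\<Sum>(I, J)\<in>succ_pairs n.
          z ^ card I * monomial m x I (insert (Suc n) J) * exponent I (insert (Suc n) J) i)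
      = (\<Sum>(I, J)\<in>succ_pairs n. m (Suc n) * exp (- x (Suc n)) * (z ^ card I * monomial m x I J
          * exponent I J i - of_bool (i = Suc n) * (z ^ card I * monomial m x I J)))"
    by (rule sum.cong)
      (auto dest!: succ_pairs_memD simp: monomial_insert_right exponent_insert_right algebra_simps)
  then show ?thesis
    unfolding genpoly_grad_def genpoly_def sum_eq_pairs_Suc
    by (simp add: sum_distrib_left case_prod_unfold sum_subtractf right_diff_distrib)
qed

lemma genpoly_grad_succ_pairs_Suc:
  "genpoly_grad m x (succ_pairs (Suc n)) z i
     = genpoly_grad m x (succ_pairs n) z i + z * m (Suc n) * exp (x (Suc n))
         * (genpoly_grad m x (eq_pairs n) z i + of_bool (i = Suc n) * genpoly m x (eq_pairs n) z)"
proof -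
  have "(\<Sum>(I, J)\<in>eq_pairs n. z ^ card (insert (Suc n) I) * monomial m x (insert (Suc n) I) J
          * exponent (insert (Suc n) I) J i)
      = (\<Sum>(I, J)\<in>eq_pairs n. z * m (Suc n) * exp (x (Suc n)) * (z ^ card I * monomial m x I J
          * exponent I J i + of_bool (i = Suc n) * (z ^ card I * monomial m x I J)))"
    by (rule sum.cong)
      (auto dest!: eq_pairs_memD simp: monomial_insert_left exponent_insert_left algebra_simps)
  then show ?thesis
    unfolding genpoly_grad_def genpoly_def sum_succ_pairs_Suc
    by (simp add: sum_distrib_left case_prod_unfold sum.distrib distrib_left)
qed

lemma genpoly_grad_eq_0:
  "(\<And>I J. (I, J) \<in> S \<Longrightarrow> i \<notin> I \<and> i \<notin> J) \<Longrightarrow> genpoly_grad m x S z i = 0"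
  by (auto simp: genpoly_grad_def exponent_def intro!: sum.neutral)

lemma sum_genpoly_grad:
  assumes "finite S" and sub: "\<And>I J. (I, J) \<in> S \<Longrightarrow> I \<subseteq> {1..n} \<and> J \<subseteq> {1..n}"
  shows "(\<Sum>i\<in>{1..n}. genpoly_grad m x S z i)
      = (\<Sum>(I, J)\<in>S. z ^ card I * monomial m x I J * (real (card I) - real (card J)))"
  unfolding genpoly_grad_def
  by (subst sum.swap) (auto simp: case_prod_unfold sum_distrib_left[symmetric] sum_exponent
      dest!: sub intro!: sum.cong)

lemma sum_genpoly_grad_eq_pairs: "(\<Sum>i\<in>{1..n}. genpoly_grad m x (eq_pairs n) z i) = 0"
  by (subst sum_genpoly_grad[OF finite_eq_pairs]) (auto simp: eq_pairs_def intro!: sum.neutral)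

lemma sum_genpoly_grad_succ_pairs:
  "(\<Sum>i\<in>{1..n}. genpoly_grad m x (succ_pairs n) z i) = genpoly m x (succ_pairs n) z"
  by (subst sum_genpoly_grad[OF finite_succ_pairs]) (auto simp: succ_pairs_def genpoly_def intro!: sum.cong)

section \<open>The r-matrix relations\<close>

text \<open>On M we have sgn (x_i - x_k) = sgn (i - k), so the Poisson bracket of two functions is
  this fixed bilinear form applied to their gradients (see poisson_eq_bracket).\<close>

definition bracket :: "nat \<Rightarrow> (nat \<Rightarrow> real) \<Rightarrow> (nat \<Rightarrow> real) \<Rightarrow> real" where
  "bracket n f g = (\<Sum>i\<in>{1..n}. \<Sum>k\<in>{1..n}. sgn (real i - real k) * f i * g k)"

lemma bracket_antisym: "bracket n f g = - bracket n g f"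
proof -
  have "bracket n g f = (\<Sum>i\<in>{1..n}. \<Sum>k\<in>{1..n}. sgn (real k - real i) * g k * f i)"
    unfolding bracket_def by (rule sum.swap)
  also have "\<dots> = - bracket n f g"
    unfolding bracket_def sum_negf[symmetric]
    by (intro sum.cong refl) (auto simp: sgn_if)
  finally show ?thesis by simp
qed

lemma bracket_self: "bracket n f f = 0"
  using bracket_antisym[of n f f] by simp

lemma bracket_cong:
  "(\<And>i. i \<in> {1..n} \<Longrightarrow> f i = f' i) \<Longrightarrow> (\<And>i. i \<in> {1..n} \<Longrightarrow> g i = g' i) \<Longrightarrow> bracket n f g = bracket n f' g'"
  unfolding bracket_def by (intro sum.cong) auto

lemma bracket_sum_left:
  "bracket n (\<lambda>i. \<Sum>j\<in>T. f j i) g = (\<Sum>j\<in>T. bracket n (f j) g)"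
proof -
  have "bracket n (\<lambda>i. \<Sum>j\<in>T. f j i) g
      = (\<Sum>i\<in>{1..n}. \<Sum>k\<in>{1..n}. \<Sum>j\<in>T. sgn (real i - real k) * f j i * g k)"
    unfolding bracket_def by (simp only: sum_distrib_left sum_distrib_right)
  also have "\<dots> = (\<Sum>i\<in>{1..n}. \<Sum>j\<in>T. \<Sum>k\<in>{1..n}. sgn (real i - real k) * f j i * g k)"
    by (intro sum.cong refl) (rule sum.swap)
  also have "\<dots> = (\<Sum>j\<in>T. bracket n (f j) g)"
    unfolding bracket_def by (rule sum.swap)
  finally show ?thesis .
qed

lemma bracket_sum_right:
  "bracket n f (\<lambda>i. \<Sum>j\<in>T. g j i) = (\<Sum>j\<in>T. bracket n f (g j))"
proof -
  have "bracket n f (\<lambda>i. \<Sum>j\<in>T. g j i) = - (\<Sum>j\<in>T. bracket n (g j) f)"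
    by (subst bracket_antisym) (simp only: bracket_sum_left)
  also have "\<dots> = (\<Sum>j\<in>T. bracket n f (g j))"
    by (subst (2) bracket_antisym) (simp add: sum_negf)
  finally show ?thesis .
qed

lemma bracket_add_left: "bracket n (\<lambda>i. f i + g i) h = bracket n f h + bracket n g h"
  unfolding bracket_def by (simp add: algebra_simps sum.distrib)

lemma bracket_add_right: "bracket n f (\<lambda>i. g i + h i) = bracket n f g + bracket n f h"
  unfolding bracket_def by (simp add: algebra_simps sum.distrib)

lemma bracket_scale_left: "bracket n (\<lambda>i. c * f i) g = c * bracket n f g"
  unfolding bracket_def by (simp add: algebra_simps sum_distrib_left)

lemma bracket_scale_right: "bracket n f (\<lambda>i. c * g i) = c * bracket n f g"
  unfolding bracket_def by (simp add: algebra_simps sum_distrib_left)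

lemma bracket_Suc:
  "bracket (Suc n) f g = bracket n f g - g (Suc n) * sum f {1..n} + f (Suc n) * sum g {1..n}"
proof -
  have "{1..Suc n} = insert (Suc n) {1..n}" by auto
  then show ?thesis
    by (simp add: bracket_def sum.distrib sum_distrib_left sum_distrib_right sum_negf algebra_simps)
qed

lemma bracket_Suc_extend:
  fixes f g f' g' :: "nat \<Rightarrow> real"
  assumes "f (Suc n) = 0" "g (Suc n) = 0" "f' (Suc n) = 0" "g' (Suc n) = 0"
  shows "bracket (Suc n) (\<lambda>i. f i + c * (g i + of_bool (i = Suc n) * e))
                         (\<lambda>i. f' i + c' * (g' i + of_bool (i = Suc n) * e'))
    = bracket n f f' + c' * bracket n f g' + c * bracket n g f' + c * c' * bracket n g g'
      - c' * e' * (sum f {1..n} + c * sum g {1..n}) + c * e * (sum f' {1..n} + c' * sum g' {1..n})"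
proof -
  have "bracket n (\<lambda>i. f i + c * (g i + of_bool (i = Suc n) * e))
                  (\<lambda>i. f' i + c' * (g' i + of_bool (i = Suc n) * e'))
      = bracket n (\<lambda>i. f i + c * g i) (\<lambda>i. f' i + c' * g' i)"
    by (rule bracket_cong) auto
  moreover have "(\<Sum>i\<in>{1..n}. f i + c * (g i + of_bool (i = Suc n) * e)) = sum f {1..n} + c * sum g {1..n}"
    by (simp add: sum.distrib sum_distrib_left)
  moreover have "(\<Sum>i\<in>{1..n}. f' i + c' * (g' i + of_bool (i = Suc n) * e')) = sum f' {1..n} + c' * sum g' {1..n}"
    by (simp add: sum.distrib sum_distrib_left)
  ultimately show ?thesis
    using assms by (simp add: bracket_Suc bracket_add_left bracket_add_right bracket_scale_left
        bracket_scale_right algebra_simps)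
qed

lemma genpoly_r_matrix_relations:
  fixes m x :: "nat \<Rightarrow> real" and l \<mu> :: real
  defines "A n \<equiv> genpoly m x (eq_pairs n)" and "B n \<equiv> genpoly m x (succ_pairs n)"
    and "dA n \<equiv> genpoly_grad m x (eq_pairs n)" and "dB n \<equiv> genpoly_grad m x (succ_pairs n)"
  shows "bracket n (dA n l) (dA n \<mu>) = 0 \<and> bracket n (dB n l) (dB n \<mu>) = 0
    \<and> (\<mu> - l) * bracket n (dA n l) (dB n \<mu>) = l * A n l * B n \<mu> - \<mu> * A n \<mu> * B n l"
proof (induction n arbitrary: l \<mu>)
  case 0
  show ?case by (simp add: bracket_def B_def genpoly_def succ_pairs_0)
next
  case (Suc n)
  define a b where "a = m (Suc n) * exp (x (Suc n))" and "b = m (Suc n) * exp (- x (Suc n))"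
  have dA_Suc: "dA (Suc n) z = (\<lambda>i. dA n z i + b * (dB n z i + of_bool (i = Suc n) * - B n z))" for z
    by (rule ext) (simp add: dA_def dB_def B_def b_def genpoly_grad_eq_pairs_Suc)
  have dB_Suc: "dB (Suc n) z = (\<lambda>i. dB n z i + z * a * (dA n z i + of_bool (i = Suc n) * A n z))" for z
    by (rule ext) (simp add: dA_def dB_def A_def a_def genpoly_grad_succ_pairs_Suc algebra_simps)
  have A_Suc: "A (Suc n) z = A n z + b * B n z" for z
    by (simp add: A_def B_def b_def genpoly_eq_pairs_Suc)
  have B_Suc: "B (Suc n) z = B n z + z * a * A n z" for z
    by (simp add: A_def B_def a_def genpoly_succ_pairs_Suc)
  have outside: "dA n z (Suc n) = 0" "dB n z (Suc n) = 0" for z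
    by (auto simp: dA_def dB_def intro!: genpoly_grad_eq_0 dest: eq_pairs_memD succ_pairs_memD)
  have sums: "sum (dA n z) {1..n} = 0" "sum (dB n z) {1..n} = B n z" for z
    unfolding dA_def dB_def B_def by (rule sum_genpoly_grad_eq_pairs sum_genpoly_grad_succ_pairs)+
  show ?case
  proof (cases "l = \<mu>")
    case True
    then show ?thesis by (simp add: bracket_self)
  next
    case False
    have AA: "bracket n (dA n l) (dA n \<mu>) = 0" and BB: "bracket n (dB n l) (dB n \<mu>) = 0"
      and AB: "(\<mu> - l) * bracket n (dA n l) (dB n \<mu>) = l * A n l * B n \<mu> - \<mu> * A n \<mu> * B n l"
      using Suc.IH[of l \<mu>] by auto
    have BA: "(\<mu> - l) * bracket n (dB n l) (dA n \<mu>) = \<mu> * A n \<mu> * B n l - l * A n l * B n \<mu>"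
      using Suc.IH[of \<mu> l] bracket_antisym[of n "dB n l"] by (simp add: algebra_simps)
    have "(\<mu> - l) * bracket (Suc n) (dA (Suc n) l) (dA (Suc n) \<mu>) = 0"
      unfolding dA_Suc sums bracket_Suc_extend[where f = "dA n l" and g = "dB n l"
          and f' = "dA n \<mu>" and g' = "dB n \<mu>", OF outside outside]
      using AA BB AB BA by algebra
    moreover have "(\<mu> - l) * bracket (Suc n) (dB (Suc n) l) (dB (Suc n) \<mu>) = 0"
      unfolding dB_Suc sums bracket_Suc_extend[where f = "dB n l" and g = "dA n l"
          and f' = "dB n \<mu>" and g' = "dA n \<mu>", OF outside(2,1) outside(2,1)]
      using AA BB AB BA by algebra
    moreover have "(\<mu> - l) * bracket (Suc n) (dA (Suc n) l) (dB (Suc n) \<mu>)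
        = l * A (Suc n) l * B (Suc n) \<mu> - \<mu> * A (Suc n) \<mu> * B (Suc n) l"
      unfolding dA_Suc dB_Suc A_Suc B_Suc sums bracket_Suc_extend[where f = "dA n l" and g = "dB n l"
          and f' = "dB n \<mu>" and g' = "dA n \<mu>", OF outside outside(2,1)]
      using AA BB AB BA by algebra
    ultimately show ?thesis using False by simp
  qed
qed

section \<open>The H_j commute\<close>

lemma prod_exp_update:
  fixes m x :: "nat \<Rightarrow> real" and c t :: real
  assumes "finite I"
  shows "(\<Prod>k\<in>I. m k * exp (c * (x(i := t)) k))
       = (\<Prod>k\<in>I. m k * exp (c * x k)) * exp (c * of_bool (i \<in> I) * (t - x i))"
proof -
  have "(\<Prod>k\<in>I. m k * exp (c * (x(i := t)) k))
      = (\<Prod>k\<in>I. m k * exp (c * x k) * (if k = i then exp (c * (t - x i)) else 1))"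
    using exp_add[of "c * x i" "c * (t - x i)"] by (intro prod.cong refl) (auto simp: algebra_simps)
  also have "\<dots> = (\<Prod>k\<in>I. m k * exp (c * x k)) * (\<Prod>k\<in>I. if k = i then exp (c * (t - x i)) else 1)"
    by (rule prod.distrib)
  finally show ?thesis using assms by (simp add: prod.delta)
qed

lemma monomial_update:
  assumes "finite I" "finite J"
  shows "monomial m (x(i := t)) I J = monomial m x I J * exp (exponent I J i * (t - x i))"
  using prod_exp_update[OF assms(1), of m 1 x i t] prod_exp_update[OF assms(2), of m "-1" x i t]
  by (simp add: monomial_def h_I_def g_J_def exponent_def mult_exp_exp algebra_simps)

lemma pderiv_at_genpoly:
  assumes "finite S" and fin: "\<And>I J. (I, J) \<in> S \<Longrightarrow> finite I \<and> finite J"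
  shows "pderiv_at (\<lambda>y. genpoly m y S z) i x = genpoly_grad m x S z i"
proof -
  have "(\<lambda>t. genpoly m (x(i := t)) S z)
      = (\<lambda>t. \<Sum>(I, J)\<in>S. z ^ card I * monomial m x I J * exp (exponent I J i * (t - x i)))"
    unfolding genpoly_def by (intro ext sum.cong) (auto simp: monomial_update dest: fin)
  moreover have "((\<lambda>t. \<Sum>(I, J)\<in>S. z ^ card I * monomial m x I J * exp (exponent I J i * (t - x i)))
      has_real_derivative genpoly_grad m x S z i) (at (x i))"
    unfolding genpoly_grad_def case_prod_unfold
    by (rule DERIV_sum) (auto intro!: derivative_eq_intros)
  ultimately show ?thesis
    unfolding pderiv_at_def by (simp add: DERIV_imp_deriv)
qed

definition eq_pairs_card :: "nat \<Rightarrow> nat \<Rightarrow> (nat set \<times> nat set) set" where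
  "eq_pairs_card n j = {p \<in> eq_pairs n. card (fst p) = j}"

lemma Hj_eq_genpoly: "Hj K m j = (\<lambda>y. genpoly m y (eq_pairs_card (2 * K + 1) j) 1)"
proof -
  have "{(I, J). I \<in> subsets_of (2*K+1) j \<and> J \<in> subsets_of (2*K+1) j \<and> interlace_eq I J}
      = eq_pairs_card (2 * K + 1) j"
    by (auto simp: eq_pairs_card_def eq_pairs_def subsets_of_def)
  then show ?thesis by (simp add: Hj_def genpoly_def monomial_def fun_eq_iff)
qed

lemma Hc_eq_genpoly:
  "Hc K m = (\<lambda>y. genpoly m y {p \<in> succ_pairs (2 * K + 1). card (snd p) = K} 1)"
proof -
  have "{(I, J). I \<in> subsets_of (2*K+1) (K+1) \<and> J \<in> subsets_of (2*K+1) K \<and> interlace_succ I J}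
      = {p \<in> succ_pairs (2 * K + 1). card (snd p) = K}"
    by (auto simp: succ_pairs_def subsets_of_def)
  then show ?thesis by (simp add: Hc_def genpoly_def monomial_def fun_eq_iff)
qed

lemma pderiv_at_Hj: "pderiv_at (Hj K m j) i x = genpoly_grad m x (eq_pairs_card (2 * K + 1) j) 1 i"
  unfolding Hj_eq_genpoly
  by (rule pderiv_at_genpoly) (auto simp: eq_pairs_card_def finite_eq_pairs dest: eq_pairs_memD)

lemma pderiv_at_Hc:
  "pderiv_at (Hc K m) i x = genpoly_grad m x {p \<in> succ_pairs (2 * K + 1). card (snd p) = K} 1 i"
  unfolding Hc_eq_genpoly
  by (rule pderiv_at_genpoly) (auto simp: finite_succ_pairs dest: succ_pairs_memD)

lemma genpoly_grad_eq_pairs_by_card: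
  "genpoly_grad m x (eq_pairs n) z = (\<lambda>i. \<Sum>j\<le>n. z ^ j * genpoly_grad m x (eq_pairs_card n j) 1 i)"
proof
  fix i
  have card_le: "card I \<le> n" if "(I, J) \<in> eq_pairs n" for I J
    using that card_mono[of "{1..n}" I] by (auto simp: eq_pairs_def)
  have "genpoly_grad m x (eq_pairs n) z i
      = (\<Sum>j\<le>n. \<Sum>p\<in>eq_pairs_card n j. z ^ card (fst p) * monomial m x (fst p) (snd p) * exponent (fst p) (snd p) i)"
    unfolding genpoly_grad_def case_prod_unfold eq_pairs_card_def
    by (rule sum.group[symmetric]) (auto simp: finite_eq_pairs dest: card_le)
  then show "genpoly_grad m x (eq_pairs n) z i = (\<Sum>j\<le>n. z ^ j * genpoly_grad m x (eq_pairs_card n j) 1 i)"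
    by (simp add: genpoly_grad_def eq_pairs_card_def case_prod_unfold sum_distrib_left mult.assoc)
qed

lemma bivariate_polyfun_eq_0:
  fixes c :: "nat \<Rightarrow> nat \<Rightarrow> real"
  assumes zero: "\<And>l \<mu>. (\<Sum>j\<le>n. l ^ j * (\<Sum>k\<le>n. \<mu> ^ k * c j k)) = 0" and "j \<le> n" "k \<le> n"
  shows "c j k = 0"
proof -
  have "(\<Sum>k\<le>n. \<mu> ^ k * c j k) = 0" for \<mu>
    using polyfun_eq_0[of "\<lambda>j. \<Sum>k\<le>n. \<mu> ^ k * c j k" n] zero \<open>j \<le> n\<close> by (simp add: mult.commute)
  then show ?thesis
    using polyfun_eq_0[of "c j" n] \<open>k \<le> n\<close> by (simp add: mult.commute)
qed

lemma bracket_eq_pairs_card: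
  assumes "j \<le> n" "k \<le> n"
  shows "bracket n (genpoly_grad m x (eq_pairs_card n j) 1) (genpoly_grad m x (eq_pairs_card n k) 1) = 0"
proof (rule bivariate_polyfun_eq_0[OF _ assms])
  fix l \<mu> :: real
  have "0 = bracket n (genpoly_grad m x (eq_pairs n) l) (genpoly_grad m x (eq_pairs n) \<mu>)"
    using genpoly_r_matrix_relations by simp
  also have "\<dots> = (\<Sum>j\<le>n. l ^ j * (\<Sum>k\<le>n. \<mu> ^ k *
      bracket n (genpoly_grad m x (eq_pairs_card n j) 1) (genpoly_grad m x (eq_pairs_card n k) 1)))"
    by (simp add: genpoly_grad_eq_pairs_by_card bracket_sum_left bracket_sum_right
        bracket_scale_left bracket_scale_right sum_distrib_left)
  finally show "(\<Sum>j\<le>n. l ^ j * (\<Sum>k\<le>n. \<mu> ^ k *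
      bracket n (genpoly_grad m x (eq_pairs_card n j) 1) (genpoly_grad m x (eq_pairs_card n k) 1))) = 0"
    by simp
qed

section \<open>H_c is a Casimir\<close>

lemma card_bounds_pairs:
  "((I, J) \<in> eq_pairs n \<longrightarrow> 2 * card I \<le> n) \<and> ((I, J) \<in> succ_pairs n \<longrightarrow> 2 * card J + 1 \<le> n)"
proof (induction n arbitrary: I J)
  case 0
  show ?case by (simp add: eq_pairs_0 succ_pairs_0)
next
  case (Suc n)
  show ?case
  proof (intro conjI impI)
    assume "(I, J) \<in> eq_pairs (Suc n)"
    then consider "(I, J) \<in> eq_pairs n" | J0 where "(I, J0) \<in> succ_pairs n"
      by (auto simp: eq_pairs_Suc)
    then show "2 * card I \<le> Suc n"
      by cases (use Suc.IH in \<open>force dest: succ_pairs_memD\<close>)+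
  next
    assume "(I, J) \<in> succ_pairs (Suc n)"
    then consider "(I, J) \<in> succ_pairs n" | I0 where "(I0, J) \<in> eq_pairs n"
      by (auto simp: succ_pairs_Suc)
    then show "2 * card J + 1 \<le> Suc n"
      by cases (use Suc.IH in \<open>force dest: eq_pairs_memD\<close>)+
  qed
qed

definition odd_part :: "nat \<Rightarrow> nat set" where "odd_part n = {i \<in> {1..n}. odd i}"
definition even_part :: "nat \<Rightarrow> nat set" where "even_part n = {i \<in> {1..n}. even i}"

lemma succ_pairs_card_Suc_double:
  "{p \<in> succ_pairs (Suc (2 * K)). card (snd p) = K}
     = (\<lambda>(I, J). (insert (Suc (2 * K)) I, J)) ` eq_pairs_card (2 * K) K"
proof -
  have "{p \<in> succ_pairs (2 * K). card (snd p) = K} = {}"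
    using card_bounds_pairs[of _ _ "2 * K"] by fastforce
  moreover have "{p \<in> (\<lambda>(I, J). (insert (Suc (2 * K)) I, J)) ` eq_pairs (2 * K). card (snd p) = K}
      = (\<lambda>(I, J). (insert (Suc (2 * K)) I, J)) ` eq_pairs_card (2 * K) K"
    by (force simp: eq_pairs_card_def dest: eq_pairs_memD)
  ultimately show ?thesis
    unfolding succ_pairs_Suc by blast
qed

lemma eq_pairs_card_Suc_Suc_double:
  "eq_pairs_card (Suc (Suc (2 * K))) (Suc K)
     = (\<lambda>(I, J). (I, insert (Suc (Suc (2 * K))) J)) ` {p \<in> succ_pairs (Suc (2 * K)). card (snd p) = K}"
proof -
  have "eq_pairs_card (Suc (2 * K)) (Suc K) = {}"
    using card_bounds_pairs[of _ _ "Suc (2 * K)"] by (fastforce simp: eq_pairs_card_def)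
  moreover have "{p \<in> (\<lambda>(I, J). (I, insert (Suc (Suc (2 * K))) J)) ` succ_pairs (Suc (2 * K)). card (fst p) = Suc K}
      = (\<lambda>(I, J). (I, insert (Suc (Suc (2 * K))) J)) ` {p \<in> succ_pairs (Suc (2 * K)). card (snd p) = K}"
    by (force dest: succ_pairs_memD)
  ultimately show ?thesis
    unfolding eq_pairs_card_def eq_pairs_Suc[of "Suc (2 * K)"] by blast
qed

lemma odd_part_Suc: "odd_part (Suc n) = (if odd (Suc n) then insert (Suc n) (odd_part n) else odd_part n)"
  by (auto simp: odd_part_def le_Suc_eq)

lemma even_part_Suc: "even_part (Suc n) = (if even (Suc n) then insert (Suc n) (even_part n) else even_part n)"
  by (auto simp: even_part_def le_Suc_eq)

lemma eq_pairs_card_double: "eq_pairs_card (2 * K) K = {(odd_part (2 * K), even_part (2 * K))}"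
proof (induction K)
  case 0
  show ?case by (auto simp: eq_pairs_card_def eq_pairs_0 odd_part_def even_part_def)
next
  case (Suc K)
  then show ?case
    by (simp add: eq_pairs_card_Suc_Suc_double succ_pairs_card_Suc_double odd_part_Suc even_part_Suc)
qed

lemma succ_pairs_card_double:
  "{p \<in> succ_pairs (2 * K + 1). card (snd p) = K} = {(odd_part (2 * K + 1), even_part (2 * K + 1))}"
  using succ_pairs_card_Suc_double[of K] by (simp add: eq_pairs_card_double odd_part_Suc even_part_Suc)

lemma sum_alternating_even: "(\<Sum>k\<in>{1..2 * K}. (-1::real) ^ Suc k) = 0"
proof (induction K)
  case (Suc K)
  have "{1..2 * Suc K} = insert (Suc (Suc (2 * K))) (insert (Suc (2 * K)) {1..2 * K})" by auto
  then show ?case using Suc.IH by simp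
qed simp

lemma bracket_alternating: "bracket (2 * K + 1) f (\<lambda>k. (-1) ^ Suc k) = 0"
proof (induction K)
  case 0
  show ?case by (simp add: bracket_def)
next
  case (Suc K)
  have "(\<Sum>k\<in>{1..2 * K + 1}. (-1::real) ^ Suc k) = 1"
    using sum_alternating_even[of K] by (simp add: atLeastAtMostSuc_conv)
  moreover have "2 * Suc K + 1 = Suc (Suc (2 * K + 1))" by simp
  ultimately show ?case
    using Suc.IH by (simp only:) (simp add: bracket_Suc atLeastAtMostSuc_conv)
qed

lemma pderiv_at_Hc_alternating:
  assumes "i \<in> {1..2 * K + 1}"
  shows "pderiv_at (Hc K m) i x
       = monomial m x (odd_part (2 * K + 1)) (even_part (2 * K + 1)) * (-1) ^ Suc i"
  unfolding pderiv_at_Hc succ_pairs_card_double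
  using assms by (simp add: genpoly_grad_def exponent_def odd_part_def even_part_def)

lemma bracket_Hc: "bracket (2 * K + 1) f (\<lambda>k. pderiv_at (Hc K m) k x) = 0"
proof -
  have "bracket (2 * K + 1) f (\<lambda>k. pderiv_at (Hc K m) k x)
      = bracket (2 * K + 1) f (\<lambda>k. monomial m x (odd_part (2 * K + 1)) (even_part (2 * K + 1)) * (-1) ^ Suc k)"
    by (rule bracket_cong) (simp_all add: pderiv_at_Hc_alternating)
  then show ?thesis by (simp only: bracket_scale_right bracket_alternating mult_zero_right)
qed

lemma poisson_eq_bracket:
  assumes "x \<in> phase_M n"
  shows "poisson n f g x = bracket n (\<lambda>i. pderiv_at f i x) (\<lambda>k. pderiv_at g k x)"
  unfolding poisson_def bracket_def
proof (intro sum.cong refl)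
  fix i k assume ik: "i \<in> {1..n}" "k \<in> {1..n}"
  have "x i < x k" if "i < k" using assms ik that by (simp add: phase_M_def)
  moreover have "x k < x i" if "k < i" using assms ik that by (simp add: phase_M_def)
  ultimately have "sgn (x i - x k) = sgn (real i - real k)"
    by (cases i k rule: linorder_cases) (auto simp: sgn_if)
  then show "sgn (x i - x k) * pderiv_at f i x * pderiv_at g k x
      = sgn (real i - real k) * pderiv_at f i x * pderiv_at g k x" by simp
qed

theorem theorem5:
  fixes K :: nat and m :: "nat \<Rightarrow> real" and x :: "nat \<Rightarrow> real"
  assumes m_pos: "\<forall>i\<in>{1..2*K+1}. m i > 0"
    and x_in_M: "x \<in> phase_M (2*K+1)"
  shows "(\<forall>j\<in>{1..K}. \<forall>l\<in>{1..K}. poisson (2*K+1) (Hj K m j) (Hj K m l) x = 0)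
       \<and> (\<forall>j\<in>{1..K}. poisson (2*K+1) (Hj K m j) (Hc K m) x = 0
                     \<and> poisson (2*K+1) (Hc K m) (Hj K m j) x = 0)
       \<and> poisson (2*K+1) (Hc K m) (Hc K m) x = 0"
proof -
  note poisson = poisson_eq_bracket[OF x_in_M]
  have Hj_Hj: "poisson (2*K+1) (Hj K m j) (Hj K m l) x = 0" if "j \<le> K" "l \<le> K" for j l
    unfolding poisson pderiv_at_Hj using that by (simp add: bracket_eq_pairs_card)
  have f_Hc: "poisson (2*K+1) f (Hc K m) x = 0" for f
    unfolding poisson by (rule bracket_Hc)
  have Hc_f: "poisson (2*K+1) (Hc K m) f x = 0" for f
    using f_Hc[of f] unfolding poisson by (subst bracket_antisym) simp
  show ?thesis using Hj_Hj f_Hc Hc_f by auto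
qed

end
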